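(* There are universal constants $c_0>0$ and $K_3>0$ such that for all $\alpha_m>0$, $\theta\in(0,1)$ and $h,\alpha_s,\eta>0$ satisfying \[ l_1:=\frac{h}{\eta^{1/3}\alpha_s^{1/3}}<c_0(1-\theta)^{2/3}\theta^{2/3}, \] one has \[ E^{1D}_{h,\alpha_s,\eta,\theta}\le K_3\frac{\theta^{4/3}}{(1-\theta)^{2/3}}\alpha_s^{2/3}\eta^{5/3}h . \] This bound is attained by a periodic pattern of bonded intervals (of length $\theta l$, with $u=0$ and $w$ affine of slope $\eta$) alternating with blisters (of length $(1-\theta)l$, on which $w_x+\frac12u_x^2-\eta=0$), with period $l\sim l_1/((1-\theta)^{2/3}\theta^{2/3})$.
   Context: Let $\mathbb T^1=\mathbb R/\mathbb Z$. Fix parameters $\alpha_m>0$, $h>0$, $\alpha_s>0$, $\eta>0$ and $\theta\in(0,1)$. The admissible class $\mathcal A^{1D}$ consists of triples $(w,u,\Omega)$ with $w\in H^1(\mathbb T^1;\mathbb R)$, $u\in H^2(\mathbb T^1;[0,\infty))$, $\Omega\subset\mathbb T^1$ closed with Lebesgue measure $|\Omega|=\theta$, and $u=0$ on $\Omega$. The energy is \[ E^{1D}[w,u,\Omega]=\alpha_m h\int_0^1\Big|w_x+\tfrac12 u_x^2-\eta\Big|^2dx+h^3\int_0^1|u_{xx}|^2dx+\alpha_s\Big(\int_\Omega|w_x|^2dx\Big)^{1/2}\Big(\int_\Omega|w|^2dx\Big)^{1/2}, \] and $E^{1D}_{h,\alpha_s,\eta,\theta}:=\inf_{(w,u,\Omega)\in\mathcal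 A^{1D}}E^{1D}[w,u,\Omega]$. *)

theory Defs
  imports "HOL-Analysis.Analysis"
begin

text \<open>The torus T^1 = R/Z is modelled by 1-periodic functions / sets on the real line.\<close>

definition periodic1 :: "(real \<Rightarrow> real) \<Rightarrow> bool" where
  "periodic1 f \<longleftrightarrow> (\<forall>x. f (x + 1) = f x)"

definition periodic_set1 :: "real set \<Rightarrow> bool" where
  "periodic_set1 S \<longleftrightarrow> (\<forall>x. x \<in> S \<longleftrightarrow> x + 1 \<in> S)"

text \<open>f is in H^1(T^1) with weak derivative g: f is 1-periodic and absolutely continuous,
  f b - f a = integral of g over [a,b], and g is square integrable over a period.\<close>
definition H1_per_deriv :: "(real \<Rightarrow> real) \<Rightarrow> (real \<Rightarrow> real) \<Rightarrow> bool" where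
  "H1_per_deriv f g \<longleftrightarrow>
     periodic1 f \<and> g \<in> borel_measurable lborel \<and>
     (\<forall>a b. a \<le> b \<longrightarrow> set_integrable lborel {a..b} g \<and>
                         f b - f a = (LINT x:{a..b}|lborel. g x)) \<and>
     set_integrable lborel {0..1} (\<lambda>x. (g x)\<^sup>2)"

definition admissible1D ::
  "real \<Rightarrow> (real \<Rightarrow> real) \<Rightarrow> (real \<Rightarrow> real) \<Rightarrow> (real \<Rightarrow> real) \<Rightarrow> (real \<Rightarrow> real)
     \<Rightarrow> (real \<Rightarrow> real) \<Rightarrow> real set \<Rightarrow> bool" where
  "admissible1D \<theta> w w1 u u1 u2 \<Omega> \<longleftrightarrow>
     H1_per_deriv w w1 \<and> H1_per_deriv u u1 \<and> H1_per_deriv u1 u2 \<and>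
     (\<forall>x. 0 \<le> u x) \<and>
     closed \<Omega> \<and> periodic_set1 \<Omega> \<and>
     measure lborel (\<Omega> \<inter> {0..<1}) = \<theta> \<and>
     (\<forall>x\<in>\<Omega>. u x = 0)"

definition energy1D ::
  "real \<Rightarrow> real \<Rightarrow> real \<Rightarrow> real \<Rightarrow> (real \<Rightarrow> real) \<Rightarrow> (real \<Rightarrow> real) \<Rightarrow> (real \<Rightarrow> real)
     \<Rightarrow> (real \<Rightarrow> real) \<Rightarrow> real set \<Rightarrow> real" where
  "energy1D \<alpha>m h \<alpha>s \<eta> w w1 u1 u2 \<Omega> =
     \<alpha>m * h * (LINT x:{0..1}|lborel. (w1 x + (u1 x)\<^sup>2 / 2 - \<eta>)\<^sup>2)
     + h ^ 3 * (LINT x:{0..1}|lborel. (u2 x)\<^sup>2)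
     + \<alpha>s * sqrt (LINT x:(\<Omega> \<inter> {0..1})|lborel. (w1 x)\<^sup>2)
           * sqrt (LINT x:(\<Omega> \<inter> {0..1})|lborel. (w x)\<^sup>2)"

definition E1D :: "real \<Rightarrow> real \<Rightarrow> real \<Rightarrow> real \<Rightarrow> real \<Rightarrow> real" where
  "E1D \<alpha>m h \<alpha>s \<eta> \<theta> =
     Inf {energy1D \<alpha>m h \<alpha>s \<eta> w w1 u1 u2 \<Omega> | w w1 u u1 u2 \<Omega>.
            admissible1D \<theta> w w1 u u1 u2 \<Omega>}"

end

theory Submission
  imports Defs
begin

text \<open>
  The bound is attained by an explicit N-periodic pattern. In each cell of length 1/N a bonded
  interval of length \<theta>/N (where u = 0 and w' = \<eta>) alternates with a blister carrying
  u(x) = A p(N x), p(s) = max(0, cos(2 \<pi> s) - cos(\<pi> (1 - \<theta>)))^3, and w' = \<eta> - (u')^2/2 is chosen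
  so that the membrane term vanishes; the amplitude A makes w periodic. Then w is odd and
  1/N-periodic, so it vanishes at the centre of each bonded interval, where it has slope \<eta>;
  hence |w| \<le> \<eta> \<theta> / (2 N) there and the surface term is at most
  \<alpha>s \<eta>^2 \<theta>^2 / (2 N). The bending term is at most 3600 \<pi>^4 h^3 \<eta> N^2 / (1 - \<theta>)^2 because the
  bending integral of p is controlled by its stretching integral up to the factor (1 - \<theta>)^-2.
  Taking 1/N comparable to l1 / ((1 - \<theta>)^(2/3) \<theta>^(2/3)) balances both terms.
\<close>

lemma deriv_integral_eq:
  fixes F f :: "real \<Rightarrow> real"
  assumes F: "\<And>x. (F has_real_derivative f x) (at x)" and f: "continuous_on UNIV f" and ab: "a \<le> b"
  shows "integral {a..b} f = F b - F a"
    and "set_integrable lborel {a..b} f"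
    and "(LINT x:{a..b}|lborel. f x) = F b - F a"
proof -
  have I: "(f has_integral (F b - F a)) {a..b}"
    using F by (intro fundamental_theorem_of_calculus[OF ab])
      (auto simp: has_real_derivative_iff_has_vector_derivative[symmetric] intro: has_field_derivative_at_within)
  then show "integral {a..b} f = F b - F a" by blast
  show si: "set_integrable lborel {a..b} f"
    by (rule borel_integrable_atLeastAtMost') (rule continuous_on_subset[OF f], simp)
  show "(LINT x:{a..b}|lborel. f x) = F b - F a"
    using set_borel_integral_eq_integral(2)[OF si] integral_unique[OF I] by simp
qed

lemma integrable_continuous_UNIV: "continuous_on UNIV f \<Longrightarrow> f integrable_on {a..b}"
  for f :: "real \<Rightarrow> real"
  by (rule integrable_continuous_interval, rule continuous_on_subset) auto

definition antider :: "(real \<Rightarrow> real) \<Rightarrow> real \<Rightarrow> real" where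
  "antider f x = (if 0 \<le> x then integral {0..x} f else - integral {x..0} f)"

lemma antider_0 [simp]: "antider f 0 = 0"
  by (simp add: antider_def)

lemma antider_has_derivative:
  fixes f :: "real \<Rightarrow> real"
  assumes f: "continuous_on UNIV f"
  shows "(antider f has_real_derivative f x) (at x)"
proof -
  define a where "a = min x 0 - 1"
  define b where "b = max x 0 + 1"
  have int: "f integrable_on {c..d}" for c d
    by (rule integrable_continuous_interval, rule continuous_on_subset[OF f], simp)
  have x: "x \<in> {a<..<b}" using a_def b_def by auto
  have eq: "antider f t = integral {a..t} f - integral {a..0} f" if "t \<in> {a..b}" for t
  proof (cases "0 \<le> t")
    case True
    then show ?thesis
      using Henstock_Kurzweil_Integration.integral_combine[where a=a and c=0 and b=t and f=f] int that a_def
      by (simp add: antider_def min_le_iff_disj)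
  next
    case False
    then show ?thesis
      using Henstock_Kurzweil_Integration.integral_combine[where a=a and c=t and b=0 and f=f] int that a_def
      by (simp add: antider_def)
  qed
  have "((\<lambda>t. integral {a..t} f) has_real_derivative f x) (at x within {a..b})"
    using integral_has_real_derivative[OF continuous_on_subset[OF f], of a b x] x by auto
  then have "((\<lambda>t. integral {a..t} f - integral {a..0} f) has_real_derivative f x) (at x)"
    using x at_within_interior[of x "{a..b}"] by (auto intro: derivative_eq_intros)
  then show ?thesis
    by (rule has_field_derivative_transform_within_open[of _ _ _ "{a<..<b}"]) (use x eq in auto)
qed

lemma antider_shift_periodic:
  fixes f :: "real \<Rightarrow> real"
  assumes f: "continuous_on UNIV f" and per: "\<And>s. f (s + 1) = f s"
  shows "antider f (x + 1) = antider f x + integral {0..1} f"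
proof -
  have "((\<lambda>t. antider f (t + 1) - antider f t) has_real_derivative 0) (at y)" for y
  proof -
    have "((\<lambda>t. antider f (t + 1) - antider f t) has_real_derivative f (y + 1) * 1 - f y) (at y)"
      by (intro DERIV_diff DERIV_chain'[OF _ antider_has_derivative[OF f]] antider_has_derivative[OF f])
        (auto intro!: derivative_eq_intros)
    then show ?thesis using per by simp
  qed
  from DERIV_isconst_all[OF allI[OF this], of x 0] show ?thesis
    by (simp add: antider_def)
qed

lemma antider_shift_nat:
  fixes f :: "real \<Rightarrow> real"
  assumes "continuous_on UNIV f" and "\<And>s. f (s + 1) = f s"
  shows "antider f (x + real n) = antider f x + real n * integral {0..1} f"
proof (induction n)
  case (Suc n)
  have "antider f (x + real (Suc n)) = antider f (x + real n) + integral {0..1} f"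
    using antider_shift_periodic[OF assms, of "x + real n"] by (simp add: algebra_simps)
  then show ?case using Suc by (simp add: algebra_simps)
qed simp

lemma antider_odd:
  fixes f :: "real \<Rightarrow> real"
  assumes f: "continuous_on UNIV f" and even: "\<And>s. f (- s) = f s"
  shows "antider f (- x) = - antider f x"
proof -
  have "((\<lambda>t. antider f t + antider f (- t)) has_real_derivative 0) (at y)" for y
  proof -
    have "((\<lambda>t. antider f t + antider f (- t)) has_real_derivative f y + f (- y) * (- 1)) (at y)"
      by (intro DERIV_add antider_has_derivative[OF f] DERIV_chain'[OF _ antider_has_derivative[OF f]])
        (auto intro!: derivative_eq_intros)
    then show ?thesis using even by simp
  qed
  from DERIV_isconst_all[OF allI[OF this], of x 0] show ?thesis by simp
qed

lemma DERIV_rescale: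
  assumes "\<And>y. (f has_real_derivative f' y) (at y)"
  shows "((\<lambda>x. k * f (a * x)) has_real_derivative k * a * f' (a * x)) (at x)"
proof -
  have "((\<lambda>x. f (a * x)) has_real_derivative f' (a * x) * a) (at x)"
    by (rule DERIV_chain'[OF _ assms]) (auto intro!: derivative_eq_intros)
  from DERIV_cmult[OF this, where c=k] show ?thesis by (simp add: ac_simps)
qed

lemma continuous_on_rescale:
  fixes f :: "real \<Rightarrow> real"
  assumes "continuous_on UNIV f"
  shows "continuous_on UNIV (\<lambda>x. k * f (a * x))"
  by (intro continuous_intros continuous_on_compose2[OF assms]) auto

lemma max0_power_has_derivative:
  assumes "1 \<le> n"
  shows "((\<lambda>y::real. (max 0 y) ^ Suc n) has_real_derivative real (Suc n) * (max 0 y) ^ n) (at y)"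
proof (cases "y = 0")
  case False
  then consider "0 < y" | "y < 0" by linarith
  then show ?thesis
  proof cases
    case 1
    have ev: "\<forall>\<^sub>F t in nhds y. (max 0 t) ^ Suc n = t ^ Suc n"
      using eventually_nhds_in_open[of "{0<..}" y] 1 by (auto elim!: eventually_mono)
    have "((\<lambda>t. t ^ Suc n) has_real_derivative real (Suc n) * y ^ n) (at y)"
      using DERIV_pow[of "Suc n" y] by simp
    then show ?thesis
      using DERIV_cong_ev[OF refl ev refl] 1 by simp
  next
    case 2
    have ev: "\<forall>\<^sub>F t in nhds y. (max 0 t) ^ Suc n = 0"
      using eventually_nhds_in_open[of "{..<0}" y] 2 by (auto elim!: eventually_mono)
    show ?thesis
      using DERIV_cong_ev[OF refl ev refl] DERIV_const[of 0 "at y"] 2 assms by (simp add: power_0_left)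
  qed
next
  case True
  have "isCont (\<lambda>t::real. \<bar>t\<bar> ^ n) 0"
    by (auto intro!: continuous_intros)
  then have lim: "((\<lambda>t::real. \<bar>t\<bar> ^ n) \<longlongrightarrow> 0) (at 0)"
    using assms by (simp add: isCont_def power_0_left)
  have "norm ((max 0 t) ^ Suc n / t) \<le> norm (\<bar>t\<bar> ^ n) * 1" for t :: real
  proof -
    have "\<bar>max 0 t\<bar> ^ Suc n \<le> \<bar>t\<bar> ^ Suc n"
      by (rule power_mono) auto
    then show ?thesis
      by (cases "t = 0") (simp_all add: abs_divide power_abs divide_le_eq mult.commute)
  qed
  then have "((\<lambda>t. ((max 0 t) ^ Suc n - (max 0 0) ^ Suc n) / (t - 0)) \<longlongrightarrow> (0::real)) (at 0)"
    using tendsto_0_le[OF lim, of "\<lambda>t. (max 0 t) ^ Suc n / t" 1] by simp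
  then show ?thesis
    using True assms by (simp add: has_field_derivative_iff power_0_left)
qed

lemma cos_2pi_shift_nat [simp]: "cos (2 * pi * (s + real n)) = cos (2 * pi * s)"
  and sin_2pi_shift_nat [simp]: "sin (2 * pi * (s + real n)) = sin (2 * pi * s)"
proof -
  have "2 * pi * (s + real n) = 2 * pi * s + 2 * real n * pi" by (simp add: algebra_simps)
  then show "cos (2 * pi * (s + real n)) = cos (2 * pi * s)" "sin (2 * pi * (s + real n)) = sin (2 * pi * s)"
    by (simp_all add: cos_add sin_add)
qed

lemma sin_ge_half:
  fixes x :: real
  assumes "0 \<le> x" "x \<le> 8/5"
  shows "x / 2 \<le> sin x"
proof -
  have "\<bar>sin x - x\<bar> \<le> inverse (fact 3) * \<bar>x\<bar> ^ 3"
    using Maclaurin_sin_bound[of x 3] by (simp add: sin_coeff_def numeral_3_eq_3)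
  then have "x - x ^ 3 / 6 \<le> sin x"
    using assms abs_ge_minus_self[of "sin x - x"] by (simp add: fact_numeral)
  moreover have "x ^ 3 / 6 \<le> x / 2"
  proof -
    have "x * x \<le> 3" using mult_mono[OF assms(2) assms(2)] assms by simp
    then show ?thesis using mult_left_mono[of "x * x" 3 x] assms by (simp add: power3_eq_cube)
  qed
  ultimately show ?thesis by simp
qed

lemma sq_le_one_minus_cos_pi:
  assumes "0 \<le> d" "d \<le> 1"
  shows "d\<^sup>2 \<le> 1 - cos (pi * d)"
proof -
  define x where "x = pi * d / 2"
  have "pi * d \<le> pi" using assms mult_left_le[of d pi] by simp
  then have x: "0 \<le> x" "x \<le> 8/5"
    using assms pi_approx(2) unfolding x_def by (auto, linarith)
  have "cos (pi * d) = 1 - 2 * (sin x)\<^sup>2" using cos_double_sin[of x] by (simp add: x_def)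
  moreover have "(x / 2)\<^sup>2 \<le> (sin x)\<^sup>2" using sin_ge_half[OF x] x by (intro power_mono) auto
  moreover have "8 * d\<^sup>2 \<le> pi\<^sup>2 * d\<^sup>2"
    using mult_mono[OF less_imp_le[OF pi_gt3] less_imp_le[OF pi_gt3]]
    by (intro mult_right_mono) (auto simp: power2_eq_square)
  moreover have "(x / 2)\<^sup>2 = pi\<^sup>2 * d\<^sup>2 / 16" by (simp add: x_def power_divide power_mult_distrib)
  ultimately show ?thesis by linarith
qed

lemma cos_2pi_le_cos_pi_iff:
  assumes "0 \<le> d" "d \<le> 1"
  shows "cos (2 * pi * t) \<le> cos (pi * d) \<longleftrightarrow>
     of_int \<lfloor>t\<rfloor> + d / 2 \<le> t \<and> t \<le> of_int \<lfloor>t\<rfloor> + 1 - d / 2"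
proof -
  define r where "r = t - of_int \<lfloor>t\<rfloor>"
  have r: "0 \<le> r" "r < 1" using floor_correct[of t] unfolding r_def by linarith+
  have "2 * pi * t = 2 * pi * r + 2 * pi * of_int \<lfloor>t\<rfloor>" by (simp add: r_def algebra_simps)
  then have cos_t: "cos (2 * pi * t) = cos (2 * pi * r)" by (simp add: cos_add)
  have pi_scale: "0 \<le> pi * a \<and> pi * a \<le> pi" if "0 \<le> a" "a \<le> 1" for a
    using mult_left_le[of a pi] that by simp
  consider "r \<le> 1/2" | "1/2 < r" by linarith
  then have "cos (2 * pi * r) \<le> cos (pi * d) \<longleftrightarrow> d / 2 \<le> r \<and> r \<le> 1 - d / 2"
  proof cases
    case 1
    have "cos (2 * pi * r) \<le> cos (pi * d) \<longleftrightarrow> pi * d \<le> pi * (2 * r)"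
      using cos_mono_le_eq[of "pi * (2 * r)" "pi * d"] pi_scale[of "2 * r"] pi_scale[of d] 1 r assms
      by (simp add: mult.assoc mult.left_commute)
    then show ?thesis using 1 assms by auto
  next
    case 2
    have "cos (2 * pi * r) = cos (pi * (2 * (1 - r)))"
      using cos_2pi_minus[of "2 * pi * r"] by (simp add: algebra_simps)
    then have "cos (2 * pi * r) \<le> cos (pi * d) \<longleftrightarrow> pi * d \<le> pi * (2 * (1 - r))"
      using cos_mono_le_eq[of "pi * (2 * (1 - r))" "pi * d"] pi_scale[of "2 * (1 - r)"] pi_scale[of d] 2 r assms
      by simp
    then show ?thesis using 2 assms by auto
  qed
  then show ?thesis unfolding cos_t r_def by linarith
qed

lemma sin_sq_le_of_cos_gt:
  fixes c s :: real
  assumes "c < cos s"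
  shows "(sin s)\<^sup>2 \<le> 2 * (1 - c)"
proof (cases "0 \<le> c")
  case True
  then have "c\<^sup>2 \<le> (cos s)\<^sup>2" using assms by (intro power_mono) auto
  moreover have "(1 - c)\<^sup>2 = 1 - 2 * c + c\<^sup>2" by (simp add: power2_eq_square algebra_simps)
  ultimately show ?thesis using sin_squared_eq[of s] zero_le_power2[of "1 - c"] by (smt (verit))
next
  case False
  then show ?thesis using sin_squared_eq[of s] zero_le_power2[of "cos s"] by (smt (verit))
qed

section \<open>The blister profile\<close>

definition bump :: "real \<Rightarrow> real \<Rightarrow> real" where
  "bump c s = max 0 (cos (2 * pi * s) - c)"

definition profile :: "real \<Rightarrow> real \<Rightarrow> real" where
  "profile c s = bump c s ^ 3"

definition profile' :: "real \<Rightarrow> real \<Rightarrow> real" where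
  "profile' c s = - 6 * pi * bump c s ^ 2 * sin (2 * pi * s)"

definition profile'' :: "real \<Rightarrow> real \<Rightarrow> real" where
  "profile'' c s = 24 * pi\<^sup>2 * bump c s * (sin (2 * pi * s))\<^sup>2 - 12 * pi\<^sup>2 * bump c s ^ 2 * cos (2 * pi * s)"

lemma profile_has_derivative: "(profile c has_real_derivative profile' c s) (at s)"
proof -
  have "((\<lambda>s. (max 0 (cos (2 * pi * s) - c)) ^ Suc 2) has_real_derivative
      real (Suc 2) * (max 0 (cos (2 * pi * s) - c)) ^ 2 * (- (2 * pi * sin (2 * pi * s)))) (at s)"
    by (rule DERIV_chain'[OF _ max0_power_has_derivative]) (auto intro!: derivative_eq_intros)
  then show ?thesis
    unfolding profile_def[abs_def] profile'_def bump_def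
    by (simp add: power3_eq_cube power2_eq_square algebra_simps)
qed

lemma profile'_has_derivative: "(profile' c has_real_derivative profile'' c s) (at s)"
proof -
  have sq: "((\<lambda>s. (max 0 (cos (2 * pi * s) - c)) ^ Suc 1) has_real_derivative
      real (Suc 1) * (max 0 (cos (2 * pi * s) - c)) ^ 1 * (- (2 * pi * sin (2 * pi * s)))) (at s)"
    by (rule DERIV_chain'[OF _ max0_power_has_derivative]) (auto intro!: derivative_eq_intros)
  have sin: "((\<lambda>s. sin (2 * pi * s)) has_real_derivative cos (2 * pi * s) * (2 * pi)) (at s)"
    by (auto intro!: derivative_eq_intros)
  from DERIV_mult[OF DERIV_cmult[OF sq, of "- 6 * pi"] sin] show ?thesis
    unfolding profile'_def[abs_def] profile''_def bump_def
    by (simp add: power2_eq_square algebra_simps)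
qed

lemma continuous_on_profile': "continuous_on UNIV (profile' c)"
  using profile'_has_derivative by (meson DERIV_isCont continuous_at_imp_continuous_on)

lemma continuous_on_profile'': "continuous_on UNIV (profile'' c)"
  unfolding profile''_def[abs_def] bump_def by (intro continuous_intros)

lemma profile_shift_nat [simp]:
  "profile c (s + real n) = profile c s"
  "profile' c (s + real n) = profile' c s"
  "profile'' c (s + real n) = profile'' c s"
  by (simp_all add: profile_def profile'_def profile''_def bump_def)

lemma profile_periodic [simp]:
  "profile c (s + 1) = profile c s"
  "profile' c (s + 1) = profile' c s"
  "profile'' c (s + 1) = profile'' c s"
  using profile_shift_nat[of c s 1] by simp_all

lemma profile'_odd: "profile' c (- s) = - profile' c s"
  by (simp add: profile'_def bump_def)

lemma profile_nonneg: "0 \<le> profile c s"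
  by (simp add: profile_def bump_def)

lemma profile_vanishes:
  assumes "cos (2 * pi * s) \<le> c"
  shows "profile c s = 0" "profile' c s = 0" "profile'' c s = 0"
  using assms by (simp_all add: profile_def profile'_def profile''_def bump_def)

lemma abs_profile''_le:
  assumes "c < 1"
  shows "\<bar>profile'' c s\<bar> \<le> 60 * pi\<^sup>2 * (1 - c)\<^sup>2"
proof (cases "cos (2 * pi * s) \<le> c")
  case True
  then show ?thesis using profile_vanishes(3) by simp
next
  case False
  define b where "b = bump c s"
  have b: "b = cos (2 * pi * s) - c" using False by (simp add: b_def bump_def)
  have b0: "0 \<le> b" and b1: "b \<le> 1 - c" using False by (auto simp: b)
  have sin: "(sin (2 * pi * s))\<^sup>2 \<le> 2 * (1 - c)"
    using False by (intro sin_sq_le_of_cos_gt) simp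
  have "\<bar>profile'' c s\<bar> \<le> 24 * pi\<^sup>2 * (b * (sin (2 * pi * s))\<^sup>2) + 12 * pi\<^sup>2 * (b\<^sup>2 * \<bar>cos (2 * pi * s)\<bar>)"
    using b0 by (simp add: profile''_def b_def[symmetric] abs_mult mult.assoc
        order_trans[OF abs_triangle_ineq4])
  also have "\<dots> \<le> 24 * pi\<^sup>2 * ((1 - c) * (2 * (1 - c))) + 12 * pi\<^sup>2 * ((1 - c)\<^sup>2 * 1)"
    using b0 b1 sin by (intro add_mono mult_left_mono mult_mono power_mono) auto
  also have "\<dots> = 60 * pi\<^sup>2 * (1 - c)\<^sup>2" by (simp add: power2_eq_square algebra_simps)
  finally show ?thesis .
qed

text \<open>Cauchy--Schwarz on [0, d/2], where the profile drops from (1 - c)^3 to 0.\<close>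
lemma integral_profile'_sq_ge:
  assumes d: "0 < d" "d < 1"
  defines "c \<equiv> cos (pi * d)"
  shows "2 * ((1 - c) ^ 3)\<^sup>2 / d \<le> integral {0..1} (\<lambda>s. (profile' c s)\<^sup>2)"
proof -
  define q where "q = (1 - c) ^ 3"
  define L where "L = d / 2"
  define m where "m = q / L"
  have L: "0 < L" "L \<le> 1" using d by (auto simp: L_def)
  have dF: "((\<lambda>s. 2 * m * profile c s + m\<^sup>2 * s) has_real_derivative 2 * m * profile' c s + m\<^sup>2) (at s)" for s
    by (auto intro!: derivative_eq_intros profile_has_derivative)
  have "continuous_on UNIV (\<lambda>s. 2 * m * profile' c s + m\<^sup>2)"
    by (intro continuous_intros continuous_on_profile')
  from deriv_integral_eq(1)[OF dF this, of 0 L]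
  have "integral {0..L} (\<lambda>s. 2 * m * profile' c s + m\<^sup>2)
      = (2 * m * profile c L + m\<^sup>2 * L) - (2 * m * profile c 0 + m\<^sup>2 * 0)"
    using L by simp
  also have "\<dots> = - 2 * m * q + m\<^sup>2 * L"
    using cos_le_one[of "pi * d"] by (simp add: profile_def bump_def q_def c_def L_def)
  finally have lin: "integral {0..L} (\<lambda>s. 2 * m * profile' c s + m\<^sup>2) = - 2 * m * q + m\<^sup>2 * L" .
  have "(\<lambda>s. (profile' c s + m)\<^sup>2) = (\<lambda>s. (profile' c s)\<^sup>2 + (2 * m * profile' c s + m\<^sup>2))"
    by (simp add: power2_eq_square algebra_simps)
  then have "integral {0..L} (\<lambda>s. (profile' c s + m)\<^sup>2)
      = integral {0..L} (\<lambda>s. (profile' c s)\<^sup>2) + integral {0..L} (\<lambda>s. 2 * m * profile' c s + m\<^sup>2)"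
    by (simp only:) (intro integral_add integrable_continuous_UNIV continuous_intros continuous_on_profile')
  moreover have "0 \<le> integral {0..L} (\<lambda>s. (profile' c s + m)\<^sup>2)"
    by (intro integral_nonneg integrable_continuous_UNIV continuous_intros continuous_on_profile') simp
  moreover have "integral {0..L} (\<lambda>s. (profile' c s)\<^sup>2) \<le> integral {0..1} (\<lambda>s. (profile' c s)\<^sup>2)"
    using L by (intro integral_subset_le integrable_continuous_UNIV continuous_intros continuous_on_profile') auto
  moreover have "2 * m * q - m\<^sup>2 * L = 2 * q\<^sup>2 / d"
    using d by (simp add: m_def L_def field_simps power2_eq_square)
  ultimately show ?thesis using lin by (simp add: q_def)
qed

lemma integral_profile''_sq_le:
  assumes d: "0 < d" "d < 1"
  defines "c \<equiv> cos (pi * d)"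
  shows "integral {0..1} (\<lambda>s. (profile'' c s)\<^sup>2) \<le> d * (60 * pi\<^sup>2 * (1 - c)\<^sup>2)\<^sup>2"
proof -
  define B where "B = (60 * pi\<^sup>2 * (1 - c)\<^sup>2)\<^sup>2"
  define L where "L = d / 2"
  define f where "f s = (profile'' c s)\<^sup>2" for s
  have L: "0 < L" "L \<le> 1 - L" using d by (auto simp: L_def)
  have "0 < d\<^sup>2" using d by simp
  then have "c < 1" using sq_le_one_minus_cos_pi[of d] d unfolding c_def by linarith
  then have bound: "f s \<le> B" for s
    using power_mono[OF abs_profile''_le[of c s], of 2] by (simp add: f_def B_def)
  have middle: "f s \<le> 0" if "s \<in> {L..1 - L}" for s
  proof -
    have "\<lfloor>s\<rfloor> = 0" using that L by (intro floor_unique) auto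
    then have "cos (2 * pi * s) \<le> c"
      using cos_2pi_le_cos_pi_iff[of d s] d that by (simp add: c_def L_def)
    then show ?thesis using profile_vanishes(3) by (simp add: f_def)
  qed
  have int: "f integrable_on {a..b}" "(\<lambda>s. k) integrable_on {a..b}" for a b k :: real
    unfolding f_def by (intro integrable_continuous_UNIV continuous_intros continuous_on_profile'')+
  have "integral {0..1} f = integral {0..L} f + integral {L..1 - L} f + integral {1 - L..1} f"
    using Henstock_Kurzweil_Integration.integral_combine[of 0 L 1 f]
      Henstock_Kurzweil_Integration.integral_combine[of L "1 - L" 1 f] int L by simp
  also have "\<dots> \<le> integral {0..L} (\<lambda>s. B) + integral {L..1 - L} (\<lambda>s. 0) + integral {1 - L..1} (\<lambda>s. B)"
    using bound middle by (intro add_mono integral_le int) auto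
  also have "\<dots> = d * B" using L by (simp add: L_def)
  finally show ?thesis by (simp add: f_def[abs_def] B_def)
qed

lemma profile_bending_le_stretching:
  assumes d: "0 < d" "d < 1"
  defines "c \<equiv> cos (pi * d)"
  shows "0 < integral {0..1} (\<lambda>s. (profile' c s)\<^sup>2)"
    and "d\<^sup>2 * integral {0..1} (\<lambda>s. (profile'' c s)\<^sup>2) \<le> 1800 * pi ^ 4 * integral {0..1} (\<lambda>s. (profile' c s)\<^sup>2)"
proof -
  define r where "r = 1 - c"
  define I where "I = integral {0..1} (\<lambda>s. (profile' c s)\<^sup>2)"
  have dr: "d\<^sup>2 \<le> r" using sq_le_one_minus_cos_pi[of d] d by (simp add: r_def c_def)
  moreover have "0 < d\<^sup>2" using d by simp
  ultimately have r: "0 < r" by linarith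
  have I: "2 * (r ^ 3)\<^sup>2 / d \<le> I"
    using integral_profile'_sq_ge[OF d] by (simp add: r_def c_def I_def)
  moreover have "0 < 2 * (r ^ 3)\<^sup>2 / d" using r d by simp
  ultimately show "0 < integral {0..1} (\<lambda>s. (profile' c s)\<^sup>2)" by (simp add: I_def)
  have "(d\<^sup>2)\<^sup>2 \<le> r\<^sup>2" using dr d by (intro power_mono) auto
  then have key: "(d\<^sup>2)\<^sup>2 * r ^ 4 \<le> r\<^sup>2 * r ^ 4"
    by (rule mult_right_mono) simp
  have "d\<^sup>2 * (d * (60 * pi\<^sup>2 * r\<^sup>2)\<^sup>2) = 3600 * pi ^ 4 * ((d\<^sup>2)\<^sup>2 * r ^ 4) / d"
    using d by (simp add: power2_eq_square power4_eq_xxxx)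
  also have "\<dots> \<le> 3600 * pi ^ 4 * (r\<^sup>2 * r ^ 4) / d"
    using key d by (intro divide_right_mono mult_left_mono) auto
  also have "\<dots> = 1800 * pi ^ 4 * (2 * (r ^ 3)\<^sup>2 / d)"
    by (simp add: power2_eq_square power4_eq_xxxx power3_eq_cube)
  also have "\<dots> \<le> 1800 * pi ^ 4 * I"
    by (rule mult_left_mono[OF I]) simp
  finally have "d\<^sup>2 * (d * (60 * pi\<^sup>2 * r\<^sup>2)\<^sup>2) \<le> 1800 * pi ^ 4 * I" .
  moreover have "d\<^sup>2 * integral {0..1} (\<lambda>s. (profile'' c s)\<^sup>2) \<le> d\<^sup>2 * (d * (60 * pi\<^sup>2 * r\<^sup>2)\<^sup>2)"
    using integral_profile''_sq_le[OF d] by (intro mult_left_mono) (simp_all add: r_def c_def)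
  ultimately show "d\<^sup>2 * integral {0..1} (\<lambda>s. (profile'' c s)\<^sup>2) \<le> 1800 * pi ^ 4 * integral {0..1} (\<lambda>s. (profile' c s)\<^sup>2)"
    by (simp add: I_def)
qed

lemma set_integral_rescaled_periodic:
  fixes f :: "real \<Rightarrow> real"
  assumes f: "continuous_on UNIV f" and per: "\<And>s. f (s + 1) = f s" and N: "0 < N"
  shows "(LINT x:{0..1}|lborel. k * f (real N * x)) = k * integral {0..1} f"
proof -
  have "((\<lambda>x. k / real N * antider f (real N * x)) has_real_derivative k * f (real N * x)) (at x)" for x
    using DERIV_rescale[OF antider_has_derivative[OF f], of "k / real N" "real N" x] N by simp
  moreover have "continuous_on UNIV (\<lambda>x. k * f (real N * x))"
    by (rule continuous_on_rescale[OF f])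
  ultimately have "(LINT x:{0..1}|lborel. k * f (real N * x))
      = k / real N * antider f (real N * 1) - k / real N * antider f (real N * 0)"
    by (rule deriv_integral_eq(3)) simp
  also have "\<dots> = k * integral {0..1} f"
    using antider_shift_nat[OF f per, of 0 N] N by simp
  finally show ?thesis .
qed

lemma set_integral_sq_le:
  fixes f :: "real \<Rightarrow> real"
  assumes S: "S \<in> sets lborel" "S \<subseteq> {a..b}" and f: "continuous_on {a..b} f"
    and bound: "\<And>x. x \<in> S \<Longrightarrow> \<bar>f x\<bar> \<le> B"
  shows "(LINT x:S|lborel. (f x)\<^sup>2) \<le> B\<^sup>2 * measure lborel S"
proof -
  have fin: "emeasure lborel S \<noteq> \<infinity>"
    using emeasure_mono[OF S(2), of lborel] by (auto simp: top_unique emeasure_lborel_Icc_eq)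
  have "(LINT x:S|lborel. (f x)\<^sup>2) \<le> (LINT x:S|lborel. B\<^sup>2)"
  proof (rule set_integral_mono)
    show "set_integrable lborel S (\<lambda>x. (f x)\<^sup>2)"
      by (rule set_integrable_subset[OF borel_integrable_atLeastAtMost' S])
        (intro continuous_intros f)
    show "set_integrable lborel S (\<lambda>x. B\<^sup>2)"
      by (rule set_integrable_subset[OF borel_integrable_atLeastAtMost' S]) simp
    show "(f x)\<^sup>2 \<le> B\<^sup>2" if "x \<in> S" for x
      using power_mono[OF bound[OF that], of 2] by simp
  qed
  also have "\<dots> = B\<^sup>2 * measure lborel S"
    using set_integral_const[OF S(1) fin, of "B\<^sup>2"] by (simp only: real_scaleR_def mult.commute)
  finally show ?thesis .
qed

lemma H1_per_derivI:
  fixes F f :: "real \<Rightarrow> real"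
  assumes F: "\<And>x. (F has_real_derivative f x) (at x)" and f: "continuous_on UNIV f"
    and per: "\<And>x. F (x + 1) = F x"
  shows "H1_per_deriv F f"
proof -
  have "set_integrable lborel {0..1} (\<lambda>x. (f x)\<^sup>2)"
    by (rule borel_integrable_atLeastAtMost') (intro continuous_intros continuous_on_subset[OF f], simp)
  then show ?thesis
    unfolding H1_per_deriv_def periodic1_def
    using deriv_integral_eq(2,3)[OF F f] per borel_measurable_continuous_onI[OF f] by auto
qed

lemma set_integral_sq_nonneg: "0 \<le> (LINT x:S|M. (f x)\<^sup>2)"
  for f :: "'a \<Rightarrow> real"
  unfolding set_lebesgue_integral_def
  by (intro Bochner_Integration.integral_nonneg) (auto simp: indicator_def)

lemma E1D_le_energy:
  assumes "admissible1D \<theta> w w1 u u1 u2 \<Omega>" and "0 < \<alpha>m" "0 < h" "0 < \<alpha>s"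
  shows "E1D \<alpha>m h \<alpha>s \<eta> \<theta> \<le> energy1D \<alpha>m h \<alpha>s \<eta> w w1 u1 u2 \<Omega>"
proof -
  have "0 \<le> energy1D \<alpha>m h \<alpha>s \<eta> w' w1' u1' u2' \<Omega>'" for w' w1' u1' u2' \<Omega>'
    unfolding energy1D_def using assms(2-4)
    by (intro add_nonneg_nonneg mult_nonneg_nonneg real_sqrt_ge_zero set_integral_sq_nonneg) auto
  then show ?thesis
    unfolding E1D_def using assms(1) by (intro cInf_lower bdd_belowI[of _ 0]) blast+
qed

section \<open>The periodic blister pattern\<close>

locale blister_pattern =
  fixes \<theta> \<eta> :: real and N :: nat
  assumes theta_pos: "0 < \<theta>" and theta_less_1: "\<theta> < 1" and eta_pos: "0 < \<eta>" and N_pos: "0 < N"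
begin

definition \<delta> :: real where "\<delta> = 1 - \<theta>"

definition \<kappa> :: real where "\<kappa> = cos (pi * \<delta>)"

definition stretching :: real where "stretching = integral {0..1} (\<lambda>s. (profile' \<kappa> s)\<^sup>2)"

definition bending :: real where "bending = integral {0..1} (\<lambda>s. (profile'' \<kappa> s)\<^sup>2)"

definition amp :: real where "amp = sqrt (2 * \<eta> / ((real N)\<^sup>2 * stretching))"

definition u :: "real \<Rightarrow> real" where "u x = amp * profile \<kappa> (real N * x)"

definition u' :: "real \<Rightarrow> real" where "u' x = amp * real N * profile' \<kappa> (real N * x)"

definition u'' :: "real \<Rightarrow> real" where "u'' x = amp * (real N)\<^sup>2 * profile'' \<kappa> (real N * x)"

definition w :: "real \<Rightarrow> real" where
  "w x = \<eta> * x - amp\<^sup>2 * real N / 2 * antider (\<lambda>s. (profile' \<kappa> s)\<^sup>2) (real N * x)"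

definition w' :: "real \<Rightarrow> real" where "w' x = \<eta> - (u' x)\<^sup>2 / 2"

definition \<Omega> :: "real set" where "\<Omega> = {x. cos (2 * pi * (real N * x)) \<le> \<kappa>}"

definition bond :: "nat \<Rightarrow> real set" where "bond k = {(real k + \<delta> / 2) / real N .. (real k + 1 - \<delta> / 2) / real N}"

lemma delta_pos: "0 < \<delta>" and delta_less_1: "\<delta> < 1"
  using theta_pos theta_less_1 by (auto simp: \<delta>_def)

lemma stretching_pos: "0 < stretching"
  unfolding stretching_def \<kappa>_def using profile_bending_le_stretching(1)[OF delta_pos delta_less_1] .

lemma bending_le: "\<delta>\<^sup>2 * bending \<le> 1800 * pi ^ 4 * stretching"
  unfolding stretching_def bending_def \<kappa>_def using profile_bending_le_stretching(2)[OF delta_pos delta_less_1] .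

lemma amp_sq: "amp\<^sup>2 * (real N)\<^sup>2 * stretching = 2 * \<eta>"
  using eta_pos stretching_pos N_pos by (simp add: amp_def)

lemma u_has_derivative: "(u has_real_derivative u' x) (at x)"
  using DERIV_rescale[OF profile_has_derivative, where k=amp and a="real N" and x=x]
  by (simp add: u_def[abs_def] u'_def)

lemma u'_has_derivative: "(u' has_real_derivative u'' x) (at x)"
  using DERIV_rescale[OF profile'_has_derivative, where k="amp * real N" and a="real N" and x=x]
  by (simp add: u'_def[abs_def] u''_def power2_eq_square mult.assoc)

lemma w_has_derivative: "(w has_real_derivative w' x) (at x)"
proof -
  have "((\<lambda>x. \<eta> * x - amp\<^sup>2 * real N / 2 * antider (\<lambda>s. (profile' \<kappa> s)\<^sup>2) (real N * x))
      has_real_derivative \<eta> - amp\<^sup>2 * real N / 2 * real N * (profile' \<kappa> (real N * x))\<^sup>2) (at x)"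
    by (intro DERIV_diff DERIV_rescale antider_has_derivative continuous_intros continuous_on_profile')
      (auto intro!: derivative_eq_intros)
  then show ?thesis
    by (simp add: w_def[abs_def] w'_def u'_def power2_eq_square mult_ac)
qed

lemma continuous_on_u': "continuous_on UNIV u'"
  using u'_has_derivative by (meson DERIV_isCont continuous_at_imp_continuous_on)

lemma continuous_on_u'': "continuous_on UNIV u''"
  unfolding u''_def[abs_def] by (rule continuous_on_rescale[OF continuous_on_profile''])

lemma continuous_on_w': "continuous_on UNIV w'"
  unfolding w'_def[abs_def] by (intro continuous_intros continuous_on_u') auto

lemma continuous_on_w: "continuous_on UNIV w"
  using w_has_derivative by (meson DERIV_isCont continuous_at_imp_continuous_on)

lemma u_periodic: "u (x + 1) = u x" and u'_periodic: "u' (x + 1) = u' x"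
  by (simp_all add: u_def u'_def distrib_left)

lemma continuous_on_profile'_sq: "continuous_on UNIV (\<lambda>s. (profile' \<kappa> s)\<^sup>2)"
  by (intro continuous_intros continuous_on_profile')

lemma w_shift: "w (x + real k / real N) = w x"
proof -
  have "real N * (x + real k / real N) = real N * x + real k" using N_pos by (simp add: field_simps)
  then have "w (x + real k / real N) = \<eta> * (x + real k / real N)
      - amp\<^sup>2 * real N / 2 * (antider (\<lambda>s. (profile' \<kappa> s)\<^sup>2) (real N * x) + real k * stretching)"
    by (simp only: w_def antider_shift_nat[OF continuous_on_profile'_sq] profile_periodic stretching_def)
  also have "\<dots> = w x + real k * (\<eta> / real N - amp\<^sup>2 * real N * stretching / 2)"
    using N_pos by (simp add: w_def field_simps)
  also have "\<eta> / real N - amp\<^sup>2 * real N * stretching / 2 = 0"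
    using amp_sq N_pos by (simp add: field_simps power2_eq_square)
  finally show ?thesis by simp
qed

lemma w_periodic: "w (x + 1) = w x"
  using w_shift[of x N] N_pos by simp

lemma w_odd: "w (- x) = - w x"
  using antider_odd[OF continuous_on_profile'_sq, of "real N * x"]
  by (simp add: w_def profile'_odd)

lemma w_bond_centre: "w ((real k + 1 / 2) / real N) = 0"
proof -
  have "w (1 / (2 * real N)) = w (- (1 / (2 * real N)) + real 1 / real N)"
    using N_pos by (simp add: field_simps)
  also have "\<dots> = - w (1 / (2 * real N))" by (simp only: w_shift w_odd)
  finally have "w (1 / (2 * real N)) = 0" by simp
  moreover have "(real k + 1 / 2) / real N = 1 / (2 * real N) + real k / real N"
    using N_pos by (simp add: field_simps)
  ultimately show ?thesis by (simp only: w_shift)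
qed

lemma mem_Omega_iff:
  "x \<in> \<Omega> \<longleftrightarrow> of_int \<lfloor>real N * x\<rfloor> + \<delta> / 2 \<le> real N * x \<and> real N * x \<le> of_int \<lfloor>real N * x\<rfloor> + 1 - \<delta> / 2"
  unfolding \<Omega>_def \<kappa>_def using cos_2pi_le_cos_pi_iff[of \<delta> "real N * x"] delta_pos delta_less_1 by simp

lemma mem_bond_iff: "x \<in> bond k \<longleftrightarrow> real k + \<delta> / 2 \<le> real N * x \<and> real N * x \<le> real k + 1 - \<delta> / 2"
  using N_pos by (simp add: bond_def pos_divide_le_eq pos_le_divide_eq mult.commute)

lemma floor_of_mem_bond: "x \<in> bond k \<Longrightarrow> \<lfloor>real N * x\<rfloor> = int k"
  using delta_pos by (intro floor_unique) (auto simp: mem_bond_iff)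

lemma bond_subset_Omega: "bond k \<subseteq> \<Omega>"
  using floor_of_mem_bond by (auto simp: mem_Omega_iff mem_bond_iff)

lemma nonneg_Omega_in_bond:
  assumes "x \<in> \<Omega>" "0 \<le> x"
  shows "x \<in> bond (nat \<lfloor>real N * x\<rfloor>)"
  using assms by (simp add: mem_Omega_iff mem_bond_iff)

lemma Omega_Int_unit: "\<Omega> \<inter> {0..<1} = (\<Union>k<N. bond k)"
proof (intro equalityI subsetI)
  fix x assume x: "x \<in> \<Omega> \<inter> {0..<1}"
  have "real N * x < real N" using x N_pos by simp
  then have "\<lfloor>real N * x\<rfloor> < int N" by (simp add: floor_less_iff)
  then have "nat \<lfloor>real N * x\<rfloor> < N" using x by (simp add: nat_less_iff)
  then show "x \<in> (\<Union>k<N. bond k)" using nonneg_Omega_in_bond x by auto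
next
  fix x assume "x \<in> (\<Union>k<N. bond k)"
  then obtain k where k: "k < N" "x \<in> bond k" by auto
  have "k + 1 \<le> N" using k(1) by simp
  then have "real k + 1 \<le> real N" by (metis of_nat_1 of_nat_add of_nat_le_iff)
  then have "0 < real N * x" "real N * x < real N"
    using k(2) delta_pos delta_less_1 unfolding mem_bond_iff by linarith+
  then show "x \<in> \<Omega> \<inter> {0..<1}"
    using bond_subset_Omega k N_pos by (auto simp: zero_less_mult_iff mult_less_cancel_left1)
qed

lemma measure_bond: "measure lborel (bond k) = \<theta> / real N"
proof -
  have "(real k + \<delta> / 2) / real N \<le> (real k + 1 - \<delta> / 2) / real N"
    using delta_less_1 by (intro divide_right_mono) auto
  then show ?thesis by (simp add: bond_def \<delta>_def diff_divide_distrib[symmetric])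
qed

lemma measure_Omega: "measure lborel (\<Omega> \<inter> {0..<1}) = \<theta>"
proof -
  have disj: "disjoint_family_on bond {..<N}"
    unfolding disjoint_family_on_def
  proof (intro ballI impI)
    fix m n :: nat assume "m \<noteq> n"
    then show "bond m \<inter> bond n = {}" using floor_of_mem_bond by (metis disjoint_iff of_nat_eq_iff)
  qed
  have "measure lborel (\<Union>k<N. bond k) = (\<Sum>k<N. measure lborel (bond k))"
    by (rule measure_finite_Union[OF _ _ disj]) (auto simp: bond_def emeasure_lborel_Icc_eq)
  then show ?thesis using N_pos by (simp add: Omega_Int_unit measure_bond)
qed

lemma closed_Omega: "closed \<Omega>"
  unfolding \<Omega>_def by (intro closed_Collect_le continuous_intros)

lemma periodic_Omega: "periodic_set1 \<Omega>"
proof -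
  have "cos (2 * pi * (real N * (x + 1))) = cos (2 * pi * (real N * x))" for x
    using cos_2pi_shift_nat[of "real N * x" N] by (simp add: distrib_left)
  then show ?thesis unfolding periodic_set1_def \<Omega>_def by simp
qed

lemma u_Omega: "x \<in> \<Omega> \<Longrightarrow> u x = 0" and u'_Omega: "x \<in> \<Omega> \<Longrightarrow> u' x = 0"
  unfolding \<Omega>_def by (simp_all add: u_def u'_def profile_vanishes)

lemma w'_Omega: "x \<in> \<Omega> \<Longrightarrow> w' x = \<eta>"
  by (simp add: w'_def u'_Omega)

lemma w_on_bond:
  assumes x: "x \<in> bond k"
  shows "w x = \<eta> * (x - (real k + 1 / 2) / real N)"
proof -
  define lo hi where "lo = (real k + \<delta> / 2) / real N" and "hi = (real k + 1 - \<delta> / 2) / real N"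
  define m where "m = (real k + 1 / 2) / real N"
  have bond: "bond k = {lo..hi}" by (simp add: bond_def lo_def hi_def)
  have m: "m \<in> {lo..hi}" using delta_pos delta_less_1 N_pos
    by (auto simp: m_def lo_def hi_def intro: divide_right_mono)
  have "lo < hi" using delta_less_1 N_pos by (simp add: lo_def hi_def divide_strict_right_mono)
  moreover have "continuous_on {lo..hi} (\<lambda>y. w y - \<eta> * y)"
    by (intro continuous_intros continuous_on_subset[OF continuous_on_w]) auto
  moreover have "((\<lambda>y. w y - \<eta> * y) has_real_derivative 0) (at y)" if "lo < y" "y < hi" for y
  proof -
    have "y \<in> \<Omega>" using bond_subset_Omega[of k] that bond by auto
    then have "w' y - \<eta> = 0" by (simp add: w'_Omega)
    then show ?thesis
      using DERIV_diff[OF w_has_derivative DERIV_cmult[OF DERIV_ident, of \<eta>], of y] by simp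
  qed
  ultimately have "w x - \<eta> * x = w lo - \<eta> * lo" "w m - \<eta> * m = w lo - \<eta> * lo"
    using x m bond by (auto intro: DERIV_isconst2[of lo hi])
  then show ?thesis using w_bond_centre[of k] by (simp add: m_def algebra_simps)
qed

lemma abs_w_Omega:
  assumes "x \<in> \<Omega>" "0 \<le> x"
  shows "\<bar>w x\<bar> \<le> \<eta> * \<theta> / (2 * real N)"
proof -
  define k where "k = nat \<lfloor>real N * x\<rfloor>"
  have x: "x \<in> bond k" using nonneg_Omega_in_bond[OF assms] by (simp add: k_def)
  then have lower: "real k + \<delta> / 2 \<le> real N * x" and upper: "real N * x \<le> real k + 1 - \<delta> / 2"
    by (simp_all add: mem_bond_iff)
  have "real N * x - (real k + 1 / 2) \<le> \<theta> / 2" using upper by (simp add: \<delta>_def diff_divide_distrib)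
  moreover have "- (real N * x - (real k + 1 / 2)) \<le> \<theta> / 2" using lower by (simp add: \<delta>_def diff_divide_distrib)
  ultimately have "\<bar>real N * x - (real k + 1 / 2)\<bar> \<le> \<theta> / 2" by (rule abs_leI)
  then have "\<bar>real N * x - (real k + 1 / 2)\<bar> / real N \<le> \<theta> / 2 / real N"
    by (rule divide_right_mono) simp
  moreover have "x - (real k + 1 / 2) / real N = (real N * x - (real k + 1 / 2)) / real N"
    using N_pos by (simp add: field_simps)
  ultimately have "\<bar>x - (real k + 1 / 2) / real N\<bar> \<le> \<theta> / 2 / real N"
    by (simp add: abs_divide)
  then have "\<eta> * \<bar>x - (real k + 1 / 2) / real N\<bar> \<le> \<eta> * (\<theta> / 2 / real N)"
    using eta_pos by (intro mult_left_mono) auto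
  then show ?thesis
    using w_on_bond[OF x] eta_pos by (simp add: abs_mult)
qed

lemma admissible: "admissible1D \<theta> w w' u u' u'' \<Omega>"
  unfolding admissible1D_def
proof (intro conjI)
  show "H1_per_deriv w w'" by (rule H1_per_derivI[OF w_has_derivative continuous_on_w' w_periodic])
  show "H1_per_deriv u u'" by (rule H1_per_derivI[OF u_has_derivative continuous_on_u' u_periodic])
  show "H1_per_deriv u' u''" by (rule H1_per_derivI[OF u'_has_derivative continuous_on_u'' u'_periodic])
  show "\<forall>x. 0 \<le> u x" using eta_pos stretching_pos by (simp add: u_def amp_def profile_nonneg)
  show "\<forall>x\<in>\<Omega>. u x = 0" by (simp add: u_Omega)
qed (fact closed_Omega periodic_Omega measure_Omega)+

lemma bending_energy_le: "(LINT x:{0..1}|lborel. (u'' x)\<^sup>2) \<le> 3600 * pi ^ 4 * \<eta> * (real N)\<^sup>2 / \<delta>\<^sup>2"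
proof -
  have "(LINT x:{0..1}|lborel. (u'' x)\<^sup>2) = (LINT x:{0..1}|lborel. amp\<^sup>2 * (real N) ^ 4 * (profile'' \<kappa> (real N * x))\<^sup>2)"
    by (simp add: u''_def power_mult_distrib flip: power_mult)
  also have "\<dots> = amp\<^sup>2 * (real N) ^ 4 * bending"
    unfolding bending_def using N_pos
    by (intro set_integral_rescaled_periodic continuous_intros continuous_on_profile'') simp_all
  also have "\<dots> = 2 * \<eta> * (real N)\<^sup>2 * (bending / stretching)"
    using amp_sq stretching_pos N_pos by (simp add: field_simps power4_eq_xxxx power2_eq_square)
  also have "\<dots> \<le> 2 * \<eta> * (real N)\<^sup>2 * (1800 * pi ^ 4 / \<delta>\<^sup>2)"
    using bending_le stretching_pos delta_pos eta_pos
    by (intro mult_left_mono) (simp_all add: pos_divide_le_eq le_divide_eq mult.commute)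
  also have "\<dots> = 3600 * pi ^ 4 * \<eta> * (real N)\<^sup>2 / \<delta>\<^sup>2" by simp
  finally show ?thesis .
qed

lemma surface_energy_le:
  "sqrt (LINT x:(\<Omega> \<inter> {0..1})|lborel. (w' x)\<^sup>2) * sqrt (LINT x:(\<Omega> \<inter> {0..1})|lborel. (w x)\<^sup>2)
    \<le> \<eta>\<^sup>2 * \<theta>\<^sup>2 / (2 * real N)"
proof -
  define S where "S = \<Omega> \<inter> {0..1}"
  have S: "S \<in> sets lborel" "S \<subseteq> {0..1}"
    using closed_Omega by (auto simp: S_def)
  have "1 \<notin> \<Omega>" using delta_pos delta_less_1 by (simp add: mem_Omega_iff)
  then have "S = \<Omega> \<inter> {0..<1}" by (auto simp: S_def less_le)
  then have mS: "measure lborel S = \<theta>" using measure_Omega by simp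
  define B where "B = \<eta> * \<theta> / (2 * real N)"
  have "(LINT x:S|lborel. (w' x)\<^sup>2) \<le> \<eta>\<^sup>2 * \<theta>"
    using set_integral_sq_le[OF S continuous_on_subset[OF continuous_on_w'], of \<eta>] eta_pos mS
    by (simp add: S_def w'_Omega)
  moreover have "(LINT x:S|lborel. (w x)\<^sup>2) \<le> B\<^sup>2 * \<theta>"
    using set_integral_sq_le[OF S continuous_on_subset[OF continuous_on_w], of B] abs_w_Omega mS
    by (simp add: S_def B_def)
  ultimately have "sqrt (LINT x:S|lborel. (w' x)\<^sup>2) * sqrt (LINT x:S|lborel. (w x)\<^sup>2)
      \<le> sqrt (\<eta>\<^sup>2 * \<theta>) * sqrt (B\<^sup>2 * \<theta>)"
    using theta_pos by (intro mult_mono real_sqrt_le_mono) (auto intro: set_integral_sq_nonneg)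
  also have "\<dots> = sqrt ((\<eta> * B * \<theta>)\<^sup>2)"
    by (simp only: real_sqrt_mult[symmetric]) (simp add: power2_eq_square mult_ac)
  also have "\<dots> = \<eta> * B * \<theta>"
    using eta_pos theta_pos N_pos by (simp add: B_def)
  also have "\<dots> = \<eta>\<^sup>2 * \<theta>\<^sup>2 / (2 * real N)" by (simp add: B_def power2_eq_square)
  finally show ?thesis by (simp add: S_def)
qed

lemma energy_le:
  assumes "0 \<le> h" "0 \<le> \<alpha>s"
  shows "energy1D \<alpha>m h \<alpha>s \<eta> w w' u' u'' \<Omega>
    \<le> \<alpha>s * \<eta>\<^sup>2 * \<theta>\<^sup>2 / (2 * real N) + 3600 * pi ^ 4 * h ^ 3 * \<eta> * (real N)\<^sup>2 / \<delta>\<^sup>2"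
proof -
  have "energy1D \<alpha>m h \<alpha>s \<eta> w w' u' u'' \<Omega> = h ^ 3 * (LINT x:{0..1}|lborel. (u'' x)\<^sup>2)
      + \<alpha>s * (sqrt (LINT x:(\<Omega> \<inter> {0..1})|lborel. (w' x)\<^sup>2) * sqrt (LINT x:(\<Omega> \<inter> {0..1})|lborel. (w x)\<^sup>2))"
    by (simp add: energy1D_def w'_def)
  also have "\<dots> \<le> h ^ 3 * (3600 * pi ^ 4 * \<eta> * (real N)\<^sup>2 / \<delta>\<^sup>2) + \<alpha>s * (\<eta>\<^sup>2 * \<theta>\<^sup>2 / (2 * real N))"
    using assms bending_energy_le surface_energy_le by (intro add_mono mult_left_mono) auto
  finally show ?thesis by (simp add: algebra_simps)
qed

end

section \<open>Choice of the period\<close>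

lemma E1D_le_blister_pattern:
  assumes "0 < \<alpha>m" "0 < h" "0 < \<alpha>s" "0 < \<eta>" "0 < \<theta>" "\<theta> < 1" "0 < N"
  shows "E1D \<alpha>m h \<alpha>s \<eta> \<theta>
    \<le> \<alpha>s * \<eta>\<^sup>2 * \<theta>\<^sup>2 / (2 * real N) + 3600 * pi ^ 4 * h ^ 3 * \<eta> * (real N)\<^sup>2 / (1 - \<theta>)\<^sup>2"
proof -
  interpret blister_pattern \<theta> \<eta> N using assms by unfold_locales
  show ?thesis
    using order_trans[OF E1D_le_energy[OF admissible assms(1-3), of \<eta>] energy_le[of h \<alpha>s \<alpha>m]] assms
    by (simp add: \<delta>_def)
qed

lemma exists_nat_between_inverse:
  assumes "0 < L" "L \<le> 1"
  obtains N :: nat where "0 < N" "1 / L \<le> real N" "real N \<le> 2 / L"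
proof
  have "1 \<le> 1 / L" using assms by simp
  then show "1 / L \<le> real (nat \<lceil>1 / L\<rceil>)" "0 < nat \<lceil>1 / L\<rceil>"
    by (simp add: real_nat_ceiling_ge, linarith)
  have "real (nat \<lceil>1 / L\<rceil>) < 1 / L + 1" using \<open>1 \<le> 1 / L\<close> by linarith
  also have "\<dots> \<le> 2 / L" using \<open>1 \<le> 1 / L\<close> by (simp add: field_simps)
  finally show "real (nat \<lceil>1 / L\<rceil>) \<le> 2 / L" by simp
qed

lemma cube_root_power: "0 < x \<Longrightarrow> (x powr (1/3)) ^ k = x powr (real k / 3)"
  for x :: real
  by (simp add: powr_power)

text \<open>The surface term decreases and the bending term increases with N; for 1/N comparable to L
  both are of the order of the claimed bound.\<close>
lemma blister_energy_at_period:
  fixes \<alpha>s \<eta> \<theta> h :: real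
  assumes pos: "0 < \<alpha>s" "0 < \<eta>" "0 < \<theta>" "\<theta> < 1" "0 < h"
  defines "L \<equiv> h / (\<eta> powr (1/3) * \<alpha>s powr (1/3) * (1 - \<theta>) powr (2/3) * \<theta> powr (2/3))"
  assumes N: "1 / L \<le> real N" "real N \<le> 2 / L"
  shows "\<alpha>s * \<eta>\<^sup>2 * \<theta>\<^sup>2 / (2 * real N) + 3600 * pi ^ 4 * h ^ 3 * \<eta> * (real N)\<^sup>2 / (1 - \<theta>)\<^sup>2
    \<le> (1/2 + 14400 * pi ^ 4) * \<theta> powr (4/3) / (1 - \<theta>) powr (2/3) * \<alpha>s powr (2/3) * \<eta> powr (5/3) * h"
proof -
  define a e d t where "a = \<alpha>s powr (1/3)" and "e = \<eta> powr (1/3)"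
    and "d = (1 - \<theta>) powr (1/3)" and "t = \<theta> powr (1/3)"
  have d_pos: "0 < 1 - \<theta>" using pos by simp
  have roots_pos: "0 < a" "0 < e" "0 < d" "0 < t"
    using pos d_pos by (simp_all add: a_def e_def d_def t_def)
  have cubes: "\<alpha>s = a ^ 3" "\<eta> = e ^ 3" "1 - \<theta> = d ^ 3" "\<theta> = t ^ 3"
    using pos d_pos by (simp_all add: a_def e_def d_def t_def cube_root_power)
  have powers: "(1 - \<theta>) powr (2/3) = d\<^sup>2" "\<theta> powr (2/3) = t\<^sup>2" "\<theta> powr (4/3) = t ^ 4"
      "\<alpha>s powr (2/3) = a\<^sup>2" "\<eta> powr (5/3) = e ^ 5"
    using pos d_pos by (simp_all add: a_def e_def d_def t_def cube_root_power)
  define T where "T = t ^ 4 / d\<^sup>2 * a\<^sup>2 * e ^ 5 * h"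
  have L: "L = h / (e * a * d\<^sup>2 * t\<^sup>2)" and "0 < L"
    using roots_pos pos by (simp_all add: L_def powers flip: a_def e_def)
  have N_pos: "0 < real N" using N \<open>0 < L\<close> by (smt (verit) divide_pos_pos)
  have "\<alpha>s * \<eta>\<^sup>2 * \<theta>\<^sup>2 / (2 * real N) \<le> \<alpha>s * \<eta>\<^sup>2 * \<theta>\<^sup>2 / 2 * L"
    using N(1) N_pos \<open>0 < L\<close> pos by (simp add: field_simps)
  also have "\<dots> = T / 2"
    unfolding T_def L cubes using roots_pos by (simp add: field_simps eval_nat_numeral)
  finally have surface: "\<alpha>s * \<eta>\<^sup>2 * \<theta>\<^sup>2 / (2 * real N) \<le> T / 2" .
  have "(real N)\<^sup>2 \<le> (2 / L)\<^sup>2" using N N_pos by (intro power_mono) auto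
  then have "3600 * pi ^ 4 * h ^ 3 * \<eta> * (real N)\<^sup>2 / (1 - \<theta>)\<^sup>2
      \<le> 3600 * pi ^ 4 * h ^ 3 * \<eta> * (2 / L)\<^sup>2 / (1 - \<theta>)\<^sup>2"
    using pos by (intro divide_right_mono mult_left_mono) auto
  also have "\<dots> = 14400 * pi ^ 4 * T"
    unfolding T_def L cubes(1-3) using roots_pos pos by (simp add: field_simps eval_nat_numeral)
  finally have bending: "3600 * pi ^ 4 * h ^ 3 * \<eta> * (real N)\<^sup>2 / (1 - \<theta>)\<^sup>2 \<le> 14400 * pi ^ 4 * T" .
  have T: "T = \<theta> powr (4/3) / (1 - \<theta>) powr (2/3) * \<alpha>s powr (2/3) * \<eta> powr (5/3) * h"
    by (simp add: T_def powers)
  from add_mono[OF surface bending]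
  have "\<alpha>s * \<eta>\<^sup>2 * \<theta>\<^sup>2 / (2 * real N) + 3600 * pi ^ 4 * h ^ 3 * \<eta> * (real N)\<^sup>2 / (1 - \<theta>)\<^sup>2
      \<le> (1/2 + 14400 * pi ^ 4) * T"
    by (simp add: algebra_simps)
  then show ?thesis by (simp add: T mult.assoc)
qed

lemma E1D_le_blister_bound:
  fixes \<alpha>m h \<alpha>s \<eta> \<theta> :: real
  assumes pos: "0 < \<alpha>m" "0 < \<theta>" "\<theta> < 1" "0 < h" "0 < \<alpha>s" "0 < \<eta>"
    and small: "h / (\<eta> powr (1/3) * \<alpha>s powr (1/3)) < (1 - \<theta>) powr (2/3) * \<theta> powr (2/3)"
  shows "E1D \<alpha>m h \<alpha>s \<eta> \<theta>
    \<le> (1/2 + 14400 * pi ^ 4) * \<theta> powr (4/3) / (1 - \<theta>) powr (2/3) * \<alpha>s powr (2/3) * \<eta> powr (5/3) * h"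
proof -
  define L where "L = h / (\<eta> powr (1/3) * \<alpha>s powr (1/3) * (1 - \<theta>) powr (2/3) * \<theta> powr (2/3))"
  have D: "0 < (1 - \<theta>) powr (2/3) * \<theta> powr (2/3)" using pos by simp
  have "L = h / (\<eta> powr (1/3) * \<alpha>s powr (1/3)) / ((1 - \<theta>) powr (2/3) * \<theta> powr (2/3))"
    by (simp add: L_def mult.assoc)
  then have "L \<le> 1" using small by (simp only: pos_divide_le_eq[OF D])
  moreover have "0 < L" using pos by (simp add: L_def)
  ultimately obtain N where N: "0 < N" "1 / L \<le> real N" "real N \<le> 2 / L"
    using exists_nat_between_inverse by blast
  show ?thesis
    using E1D_le_blister_pattern[OF pos(1,4,5,6,2,3) N(1)]
      blister_energy_at_period[OF pos(5,6,2,3,4) N(2-3)[unfolded L_def]]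
    by (rule order_trans)
qed

theorem theorem1:
  shows "\<exists>c0>0. \<exists>K3>0. \<forall>\<alpha>m h \<alpha>s \<eta> \<theta> :: real.
    \<alpha>m > 0 \<and> 0 < \<theta> \<and> \<theta> < 1 \<and> h > 0 \<and> \<alpha>s > 0 \<and> \<eta> > 0 \<and>
    h / (\<eta> powr (1/3) * \<alpha>s powr (1/3)) < c0 * (1 - \<theta>) powr (2/3) * \<theta> powr (2/3) \<longrightarrow>
    E1D \<alpha>m h \<alpha>s \<eta> \<theta> \<le>
      K3 * \<theta> powr (4/3) / (1 - \<theta>) powr (2/3) * \<alpha>s powr (2/3) * \<eta> powr (5/3) * h"
  using E1D_le_blister_bound
  by (intro exI[of _ 1] exI[of _ "1/2 + 14400 * pi ^ 4"] conjI allI impI) (auto intro: add_pos_nonneg)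

end
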